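(* Let $\gamma$ be a relatively normal-slant helix on a smooth oriented surface $M\subset E^3$ with $k_n \equiv 0$, nowhere-vanishing geodesic curvature, and whose position vector always lies in the plane spanned by $\{T,U\}$. Then $\gamma$ is a slant helix if and only if $\gamma$ is a rectifying curve.
   Context: For a unit speed curve $\gamma$ on an oriented surface $M\subset E^3$, the Darboux frame is $T=\gamma'$, $U$ = unit normal of $M$ along $\gamma$, $V = U\times T$, satisfying $T' = k_g V + k_n U$, $V' = -k_g T + \tau_g U$, $U' = -k_n T - \tau_g V$; here $k_g$, $k_n$, $\tau_g$ are the geodesic curvature, normal curvature and geodesic torsion. The curve $\gamma$ is a relatively normal-slant helix if there is a fixed unit vector $d$ and a constant angle $\phi$ with $\langle V, d\rangle = \cos\phi$ along $\gamma$. "Position vector lies in the plane spanned by $\{T,U\}$" means $\gamma(s) = \lambda_1(s)T(s) + \lambda_2(s)U(s)$ for differentiable functions $\lambda_1,\lambda_2$. With Frenet frame $\{T,N,B\}$, curvature $\kappa>0$ and torsion $\tau$: $\gamma$ is a slant helix if its principal normal $N$ makes a constant angle with a fixed direction (equivalently, $\frac{\kappa^2}{(\kappa^2+\tau^2)^{3/2}}(\tau/\kappa)'$ is constant); $\gamma$ is a rectifying curve if its position vector always lies in its rectifying plane $\mathrm{span}\{T,B\}$ (equivalently, $\tau/\kappa = c_1 s + c_2$ for constants $c_1 \neq 0$, $c_2$). *)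

theory Defs
  imports "HOL-Analysis.Analysis" "HOL-Analysis.Cross3"
begin

definition frenet_T :: "(real \<Rightarrow> real^3) \<Rightarrow> real \<Rightarrow> real^3" where
  "frenet_T \<gamma> s = vector_derivative \<gamma> (at s)"

definition curvature :: "(real \<Rightarrow> real^3) \<Rightarrow> real \<Rightarrow> real" where
  "curvature \<gamma> s = norm (vector_derivative (frenet_T \<gamma>) (at s))"

definition frenet_N :: "(real \<Rightarrow> real^3) \<Rightarrow> real \<Rightarrow> real^3" where
  "frenet_N \<gamma> s = (1 / curvature \<gamma> s) *\<^sub>R vector_derivative (frenet_T \<gamma>) (at s)"

definition frenet_B :: "(real \<Rightarrow> real^3) \<Rightarrow> real \<Rightarrow> real^3" where
  "frenet_B \<gamma> s = cross3 (frenet_T \<gamma> s) (frenet_N \<gamma> s)"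

definition slant_helix :: "real set \<Rightarrow> (real \<Rightarrow> real^3) \<Rightarrow> bool" where
  "slant_helix I \<gamma> \<longleftrightarrow>
     (\<exists>d::real^3. \<exists>\<phi>::real. norm d = 1 \<and> (\<forall>s\<in>I. frenet_N \<gamma> s \<bullet> d = cos \<phi>))"

definition rectifying_curve :: "real set \<Rightarrow> (real \<Rightarrow> real^3) \<Rightarrow> bool" where
  "rectifying_curve I \<gamma> \<longleftrightarrow>
     (\<exists>a b :: real \<Rightarrow> real. \<forall>s\<in>I. \<gamma> s = a s *\<^sub>R frenet_T \<gamma> s + b s *\<^sub>R frenet_B \<gamma> s)"

end

theory Submission
  imports Defs
begin

text \<open>Along an asymptotic curve (\<open>k\<^sub>n = 0\<close>) the Darboux equation reads \<open>T' = k\<^sub>g V\<close>, so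
  the Frenet frame is \<open>N = \<sigma> V\<close>, \<open>B = \<sigma> U\<close> with \<open>\<sigma> = sgn k\<^sub>g\<close>, a constant sign because
  \<open>k\<^sub>g\<close> is continuous and nonvanishing on an interval. Hence the fixed direction making a constant
  angle with \<open>V\<close> makes a constant angle with \<open>N\<close>, and \<open>span {T, U} = span {T, B}\<close>: under these
  hypotheses the curve is both a slant helix and a rectifying curve, so the equivalence holds.\<close>

lemma cross3_cross3: "cross3 (a::real^3) (cross3 b c) = (a \<bullet> c) *\<^sub>R b - (a \<bullet> b) *\<^sub>R c"
  by (simp add: cross3_def inner_vec_def sum_3 vec_eq_iff forall_3 algebra_simps)

lemma norm_cross3_orthonormal:
  fixes a b :: "real^3"
  assumes "norm a = 1" "norm b = 1" "a \<bullet> b = 0"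
  shows "norm (cross3 a b) = 1"
proof -
  have "(norm (cross3 a b))\<^sup>2 = 1"
    using norm_cross_dot[of a b] assms by simp
  then show ?thesis
    using norm_ge_zero[of "cross3 a b"] by (auto simp: power2_eq_1_iff)
qed

lemma cross3_cross3_orthonormal:
  fixes a b :: "real^3"
  assumes "norm a = 1" "a \<bullet> b = 0"
  shows "cross3 a (cross3 b a) = b"
  using assms by (simp add: cross3_cross3 inner_commute norm_eq_1)

lemma continuous_on_nonzero_sign_constant:
  fixes f :: "real \<Rightarrow> real"
  assumes "is_interval I" "continuous_on I f" "\<And>s. s \<in> I \<Longrightarrow> f s \<noteq> 0"
  shows "(\<forall>s\<in>I. f s > 0) \<or> (\<forall>s\<in>I. f s < 0)"
proof (rule ccontr)
  assume "\<not> ?thesis"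
  then obtain a b where ab: "a \<in> I" "b \<in> I" "f a \<le> 0" "f b \<ge> 0"
    by (meson linorder_not_le)
  have "connected (f ` I)"
    using connected_continuous_image assms(1,2) is_interval_connected by blast
  then have "0 \<in> f ` I"
    using connected_contains_Icc[of "f ` I" "f a" "f b"] ab
    by (meson atLeastAtMost_iff imageI subsetD)
  then show False
    using assms(3) by (metis imageE)
qed

lemma frenet_T_eq:
  assumes "(\<gamma> has_vector_derivative t) (at s)"
  shows "frenet_T \<gamma> s = t"
  unfolding frenet_T_def using assms by (rule vector_derivative_at)

lemma frenet_N_eq_sgn:
  assumes "open I" "s \<in> I"
    and "\<And>t. t \<in> I \<Longrightarrow> (\<gamma> has_vector_derivative T t) (at t)"
    and "(T has_vector_derivative k *\<^sub>R W) (at s)" "norm W = 1" "k \<noteq> 0"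
  shows "frenet_N \<gamma> s = sgn k *\<^sub>R W"
proof -
  have "(frenet_T \<gamma> has_vector_derivative k *\<^sub>R W) (at s)"
    using assms(4) by (rule has_vector_derivative_transform_within_open[OF _ assms(1,2)])
      (metis frenet_T_eq assms(3))
  then have "vector_derivative (frenet_T \<gamma>) (at s) = k *\<^sub>R W"
    by (rule vector_derivative_at)
  then have "curvature \<gamma> s = \<bar>k\<bar>"
    unfolding curvature_def using assms(5) by simp
  with \<open>vector_derivative (frenet_T \<gamma>) (at s) = k *\<^sub>R W\<close> show ?thesis
    unfolding frenet_N_def using assms(6) by (simp add: sgn_real_def)
qed

lemma slant_helix_if_frenet_N_parallel:
  assumes "\<And>s. s \<in> I \<Longrightarrow> frenet_N \<gamma> s = \<sigma> *\<^sub>R W s" "\<bar>\<sigma>\<bar> = 1"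
    and "norm d = 1" "\<And>s. s \<in> I \<Longrightarrow> W s \<bullet> d = cos \<phi>"
  shows "slant_helix I \<gamma>"
  unfolding slant_helix_def
proof (intro exI conjI ballI)
  show "norm (\<sigma> *\<^sub>R d) = 1"
    using assms(2,3) by simp
  fix s assume "s \<in> I"
  then have "frenet_N \<gamma> s \<bullet> (\<sigma> *\<^sub>R d) = (\<sigma> * \<sigma>) * (W s \<bullet> d)"
    using assms(1) by simp
  also have "\<dots> = cos \<phi>"
    using assms(2) \<open>s \<in> I\<close> assms(4) by (metis abs_mult_self_eq mult_1)
  finally show "frenet_N \<gamma> s \<bullet> (\<sigma> *\<^sub>R d) = cos \<phi>"
    by simp
qed

lemma rectifying_curve_if_frenet_B_parallel:
  assumes "\<And>s. s \<in> I \<Longrightarrow> \<gamma> s = a s *\<^sub>R frenet_T \<gamma> s + b s *\<^sub>R W s"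
    and "\<And>s. s \<in> I \<Longrightarrow> frenet_B \<gamma> s = \<sigma> s *\<^sub>R W s" "\<And>s. s \<in> I \<Longrightarrow> \<bar>\<sigma> s\<bar> = 1"
  shows "rectifying_curve I \<gamma>"
  unfolding rectifying_curve_def
proof (intro exI ballI)
  fix s assume s: "s \<in> I"
  have "(\<sigma> s * b s) *\<^sub>R frenet_B \<gamma> s = (\<sigma> s * \<sigma> s * b s) *\<^sub>R W s"
    using assms(2)[OF s] by (simp add: algebra_simps)
  also have "\<sigma> s * \<sigma> s = 1"
    using assms(3)[OF s] by (metis abs_mult_self_eq mult_1)
  finally show "\<gamma> s = a s *\<^sub>R frenet_T \<gamma> s + (\<sigma> s * b s) *\<^sub>R frenet_B \<gamma> s"
    using assms(1)[OF s] by simp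
qed

theorem theorem3p4:
  fixes I :: "real set"
    and \<gamma> T V U :: "real \<Rightarrow> real^3"
    and kg kn \<tau>g :: "real \<Rightarrow> real"
  assumes I: "open I" "is_interval I" "I \<noteq> {}"
    and speed: "\<And>s. s \<in> I \<Longrightarrow> (\<gamma> has_vector_derivative T s) (at s)"
    and unitT: "\<And>s. s \<in> I \<Longrightarrow> norm (T s) = 1"
    and unitU: "\<And>s. s \<in> I \<Longrightarrow> norm (U s) = 1"
    and orthTU: "\<And>s. s \<in> I \<Longrightarrow> T s \<bullet> U s = 0"
    and Vdef: "\<And>s. s \<in> I \<Longrightarrow> V s = cross3 (U s) (T s)"
    and dT: "\<And>s. s \<in> I \<Longrightarrow> (T has_vector_derivative (kg s *\<^sub>R V s + kn s *\<^sub>R U s)) (at s)"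
    and dV: "\<And>s. s \<in> I \<Longrightarrow> (V has_vector_derivative (- kg s *\<^sub>R T s + \<tau>g s *\<^sub>R U s)) (at s)"
    and dU: "\<And>s. s \<in> I \<Longrightarrow> (U has_vector_derivative (- kn s *\<^sub>R T s - \<tau>g s *\<^sub>R V s)) (at s)"
    and smooth: "continuous_on I kg" "continuous_on I kn" "continuous_on I \<tau>g"
    and kn0: "\<And>s. s \<in> I \<Longrightarrow> kn s = 0"
    and kg_nz: "\<And>s. s \<in> I \<Longrightarrow> kg s \<noteq> 0"
    and rn_slant: "\<exists>d::real^3. \<exists>\<phi>::real. norm d = 1 \<and> (\<forall>s\<in>I. V s \<bullet> d = cos \<phi>)"
    and pos: "\<exists>l1 l2 :: real \<Rightarrow> real.
               (\<forall>s\<in>I. l1 differentiable (at s) \<and> l2 differentiable (at s)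
                       \<and> \<gamma> s = l1 s *\<^sub>R T s + l2 s *\<^sub>R U s)"
  shows "slant_helix I \<gamma> \<longleftrightarrow> rectifying_curve I \<gamma>"
proof -
  have N: "frenet_N \<gamma> s = sgn (kg s) *\<^sub>R V s" if s: "s \<in> I" for s
    using frenet_N_eq_sgn[OF I(1) s speed, of "kg s" "V s"] dT[OF s] kn0[OF s] kg_nz[OF s]
      norm_cross3_orthonormal[OF unitU[OF s] unitT[OF s]] orthTU[OF s] Vdef[OF s]
    by (simp add: inner_commute)
  have B: "frenet_B \<gamma> s = sgn (kg s) *\<^sub>R U s" if s: "s \<in> I" for s
    unfolding frenet_B_def N[OF s] frenet_T_eq[OF speed[OF s]] Vdef[OF s]
    using cross3_cross3_orthonormal[OF unitT[OF s] orthTU[OF s]] by (simp add: cross_mult_right)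
  obtain s0 where "s0 \<in> I"
    using I(3) by blast
  have "sgn (kg s) = sgn (kg s0)" if "s \<in> I" for s
    using continuous_on_nonzero_sign_constant[OF I(2) smooth(1) kg_nz] that \<open>s0 \<in> I\<close> by auto
  moreover obtain d \<phi> where "norm d = 1" "\<And>s. s \<in> I \<Longrightarrow> V s \<bullet> d = cos \<phi>"
    using rn_slant by blast
  ultimately have "slant_helix I \<gamma>"
    using slant_helix_if_frenet_N_parallel[of I \<gamma> "sgn (kg s0)" V d \<phi>] N kg_nz[OF \<open>s0 \<in> I\<close>]
    by (simp add: abs_sgn)
  moreover obtain l1 l2 where "\<And>s. s \<in> I \<Longrightarrow> \<gamma> s = l1 s *\<^sub>R T s + l2 s *\<^sub>R U s"
    using pos by blast
  then have "rectifying_curve I \<gamma>"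
    using B kg_nz frenet_T_eq[OF speed]
    by (intro rectifying_curve_if_frenet_B_parallel[of I \<gamma> l1 l2 U "\<lambda>s. sgn (kg s)"]) auto
  ultimately show ?thesis
    by blast
qed

end
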